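(* Let $\|\cdot\|=\|\cdot\|_2$, and let $d_*>0$, $a<d_*$, $\bar D>0$. Then $$\kappa(a,d_*,\bar D)\le\sqrt{\max\Big\{1-\frac{(d_*-a)^2}{4\bar D^2},\ \frac{d_*+a}{2d_*}\Big\}},$$ where $\kappa(a,d_*,\bar D):=\max\{\min_{\beta\in[0,1]}\|w-\beta z\|_2:\ \|w\|_2=1,\ w^\top z\ge(1-a/d_* )/2,\ \|z\|_2\le\bar D/d_*\}$.
   Context: For the $\ell_2$-norm, $\nabla\|w\|_2=w$ when $\|w\|_2=1$, so the general definition $\kappa(a,d_*,\bar D)=\max_{\|w\|=1,\ \nabla\|w\|^\top z\ge(1-a/d_* )/2,\ \|z\|_2\le\bar D/d_*}\min_{\beta\in[0,1]}\|w-\beta z\|$ reduces to the one stated. *)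

theory Defs
  imports "HOL-Analysis.Analysis"
begin

definition kappa_inner :: "'a::euclidean_space \<Rightarrow> 'a \<Rightarrow> real" where
  "kappa_inner w z = (INF \<beta>\<in>{0..1::real}. norm (w - \<beta> *\<^sub>R z))"

definition kappa_feasible :: "real \<Rightarrow> real \<Rightarrow> real \<Rightarrow> ('a::euclidean_space \<times> 'a) set" where
  "kappa_feasible a ds Db = {(w, z). norm w = 1 \<and> inner w z \<ge> (1 - a / ds) / 2 \<and> norm z \<le> Db / ds}"

end

theory Submission
  imports Defs
begin

text \<open>With \<open>t = w \<bullet> z\<close> and \<open>s = \<parallel>z\<parallel>\<^sup>2\<close> one has
  \<open>\<parallel>w - \<beta> z\<parallel>\<^sup>2 = 1 - 2\<beta>t + \<beta>\<^sup>2s\<close> for a unit vector \<open>w\<close>. If \<open>t \<ge> s\<close>, the choice \<open>\<beta> = 1\<close>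
  gives at most \<open>1 - t \<le> (d\<^sub>* + a)/(2d\<^sub>*)\<close>; otherwise the unconstrained minimiser
  \<open>\<beta> = t/s\<close> lies in \<open>[0,1]\<close> and gives \<open>1 - t\<^sup>2/s \<le> 1 - (d\<^sub>* - a)\<^sup>2/(4D\<^sup>2)\<close>.\<close>

lemma norm_diff_scaleR_power2:
  fixes w z :: "'a::real_inner"
  shows "(norm (w - \<beta> *\<^sub>R z))\<^sup>2 = (norm w)\<^sup>2 - 2 * \<beta> * (w \<bullet> z) + \<beta>\<^sup>2 * (norm z)\<^sup>2"
  unfolding power2_norm_eq_inner
  by (simp add: inner_diff_left inner_diff_right inner_commute algebra_simps power2_eq_square)

lemma kappa_inner_le_norm:
  assumes "\<beta> \<in> {0..1}"
  shows "kappa_inner w z \<le> norm (w - \<beta> *\<^sub>R z)"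
  unfolding kappa_inner_def
  by (rule cINF_lower[OF _ assms]) (auto intro: bdd_belowI[where m = 0])

lemma exists_segment_point_close:
  fixes w z :: "'a::real_inner"
  assumes w: "norm w = 1" and c: "0 < c" "c \<le> w \<bullet> z" and R: "norm z \<le> R"
  shows "\<exists>\<beta>\<in>{0..1}. (norm (w - \<beta> *\<^sub>R z))\<^sup>2 \<le> max (1 - c\<^sup>2 / R\<^sup>2) (1 - c)"
proof -
  define t where "t = w \<bullet> z"
  define s where "s = (norm z)\<^sup>2"
  have sq: "(norm (w - \<beta> *\<^sub>R z))\<^sup>2 = 1 - 2 * \<beta> * t + \<beta>\<^sup>2 * s" for \<beta>
    using norm_diff_scaleR_power2[of w \<beta> z] w by (simp add: t_def s_def)
  have "t \<le> norm z"
    using Cauchy_Schwarz_ineq2[of w z] w by (simp add: t_def)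
  then have ts: "t\<^sup>2 \<le> s" and t0: "0 < t"
    using c by (auto simp: t_def s_def power_mono)
  then have s0: "0 < s"
    by (smt (verit) zero_less_power2)
  show ?thesis
  proof (cases "s \<le> t")
    case True
    then have "(norm (w - 1 *\<^sub>R z))\<^sup>2 \<le> 1 - c"
      using sq[of 1] c by (simp add: t_def)
    then show ?thesis
      by (intro bexI[of _ 1]) (auto intro: max.coboundedI2)
  next
    case False
    have "c\<^sup>2 / R\<^sup>2 \<le> t\<^sup>2 / s"
    proof (rule frac_le)
      show "c\<^sup>2 \<le> t\<^sup>2" using c by (simp add: t_def power_mono)
      show "s \<le> R\<^sup>2" using R by (simp add: s_def power_mono)
    qed (use s0 in auto)
    moreover have "(norm (w - (t / s) *\<^sub>R z))\<^sup>2 = 1 - t\<^sup>2 / s"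
      using sq[of "t / s"] s0 by (simp add: field_simps power2_eq_square)
    moreover have "t / s \<in> {0..1}"
      using False t0 s0 by simp
    ultimately show ?thesis
      by (intro bexI[of _ "t / s"]) (auto intro: max.coboundedI1)
  qed
qed

lemma kappa_inner_le_sqrt_max:
  assumes "norm w = 1" "0 < c" "c \<le> w \<bullet> z" "norm z \<le> R"
  shows "kappa_inner w z \<le> sqrt (max (1 - c\<^sup>2 / R\<^sup>2) (1 - c))"
proof -
  obtain \<beta> where \<beta>: "\<beta> \<in> {0..1}"
    and close: "(norm (w - \<beta> *\<^sub>R z))\<^sup>2 \<le> max (1 - c\<^sup>2 / R\<^sup>2) (1 - c)"
    using exists_segment_point_close[OF assms] by blast
  have "kappa_inner w z \<le> norm (w - \<beta> *\<^sub>R z)"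
    using \<beta> by (rule kappa_inner_le_norm)
  also have "\<dots> \<le> sqrt (max (1 - c\<^sup>2 / R\<^sup>2) (1 - c))"
    using close by (rule real_le_rsqrt)
  finally show ?thesis .
qed

theorem mainTheorem8:
  fixes a ds Db :: real and w z :: "'a::euclidean_space"
  assumes "ds > 0" and "a < ds" and "Db > 0"
    and "(w, z) \<in> kappa_feasible a ds Db"
  shows "kappa_inner w z \<le> sqrt (max (1 - (ds - a)^2 / (4 * Db^2)) ((ds + a) / (2 * ds)))"
proof -
  define c where "c = (1 - a / ds) / 2"
  have "0 < c"
    using assms(1,2) by (simp add: c_def field_simps)
  moreover have "c\<^sup>2 / (Db / ds)\<^sup>2 = (ds - a)\<^sup>2 / (4 * Db\<^sup>2)" and "1 - c = (ds + a) / (2 * ds)"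
    using assms(1,3) by (simp_all add: c_def field_simps power2_eq_square)
  ultimately show ?thesis
    using kappa_inner_le_sqrt_max[of w c z "Db / ds"] assms(4)
    by (simp add: kappa_feasible_def c_def)
qed

end
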